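(* Let $J\ge 1$, let $\Lambda=\Lambda_0\times\cdots\times\Lambda_J\subset\mathcal{G}$ and $\tilde\Lambda=\tilde\Lambda_0\times\cdots\times\tilde\Lambda_J\subset\mathcal{G}$ be finite product sets with $\Lambda\subseteq\tilde\Lambda$ and $\#(\tilde\Lambda_j\setminus\Lambda_j)=1$ for $j=1,\dots,J$, let $\mathbf{r}\in\ell_2(\mathcal{G})$ with $\operatorname{supp}\mathbf{r}\subseteq\tilde\Lambda$, and let $\alpha\in(0,1)$. Let $\bar\Lambda=\bar\Lambda_0\times\cdots\times\bar\Lambda_J$ be the product set produced by the procedure $\mathrm{Expand}(\mathbf{r},\Lambda,\tilde\Lambda,\alpha)$ described in the context. Then $\|\mathbf{R}_{\bar\Lambda}\mathbf{r}\|\ge\alpha\|\mathbf{r}\|$. Moreover, if $\widehat\Lambda=\widehat\Lambda_0\times\cdots\times\widehat\Lambda_J\subset\mathcal{G}$ is a product set such that $\sum_{j=0}^J\#(\widehat\Lambda_j\setminus\Lambda_j)$ is minimal among all product sets $\Lambda'\subset\mathcal{G}$ satisfying $\|\mathbf{R}_{\Lambda'}\mathbf{r}\|\ge\alpha\|\mathbf{r}\|$, then \[ \sum_{j=0}^J\#(\bar\Lambda_j\setminus\Lambda_j)\le\sum_{j=0}^J\#(\widehat\Lambda_j\setminus\Lambda_j)+J . \]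
   Context: Index sets: $\mathcal{F}=\{\nu\in\mathbb{N}_0^{\mathbb{N}}:\nu_i\neq0$ for only finitely many $i\}$, $\mathcal{S}$ a countable index set, $\mathcal{G}_0=\mathcal{F}\times\mathcal{S}$ (elements written $(\bar\nu,\lambda)$), $\mathcal{G}_j=\mathbb{N}_0$ for $j=1,\dots,J$, and $\mathcal{G}=\mathcal{G}_0\times\mathcal{G}_1\times\cdots\times\mathcal{G}_J$; $\|\cdot\|$ is the $\ell_2(\mathcal{G})$ norm. A product set is a set of the form $\Lambda_0\times\cdots\times\Lambda_J$ with $\Lambda_j\subseteq\mathcal{G}_j$. For $\Lambda\subseteq\mathcal{G}$, $\mathbf{R}_\Lambda$ is the operator on $\ell_2(\mathcal{G})$ multiplying pointwise by the indicator function of $\Lambda$. Contractions: for $\mathbf{v}\in\ell_2(\mathcal{G})$, with entries $\mathbf{v}_{(\bar\nu,\lambda),\nu}$ for $(\bar\nu,\lambda)\in\mathcal{G}_0$, $\nu=(\nu_1,\dots,\nu_J)\in\mathcal{G}_1\times\cdots\times\mathcal{G}_J$, define $\pi^{(0)}_{(\bar\nu,\lambda)}(\mathbf{v})=\big(\sum_{\nu}|\mathbf{v}_{(\bar\nu,\lambda),\nu}|^2\big)^{1/2}$ and, for $j=1,\dots,J$ and $\nu_j\in\mathcal{G}_j$, $\pi^{(j)}_{\nu_j}(\mathbf{v})=\big(\sum_{(\bar\nu,\lambda)\in\mathcal{G}_0}\sum_{\check\nu_j}|\mathbf{v}_{(\bar\nu,\lambda),\nu}|^2\big)^{1/2}$,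 where $\check\nu_j=(\nu_1,\dots,\nu_{j-1},\nu_{j+1},\dots,\nu_J)$ ranges over $\prod_{i\neq j,\,1\le i\le J}\mathcal{G}_i$. Procedure $\mathrm{Expand}(\mathbf{r},\Lambda,\tilde\Lambda,\alpha)$: (1) Consider the finite family of "new-index contractions" consisting of $\pi^{(0)}_{(\bar\nu,\lambda)}(\mathbf{r})$ for $(\bar\nu,\lambda)\in\tilde\Lambda_0\setminus\Lambda_0$ and $\pi^{(j)}_{\nu_j}(\mathbf{r})$ for $\nu_j\in\tilde\Lambda_j\setminus\Lambda_j$, $j=1,\dots,J$, each associated with its mode $j$ and index; arrange them in nonincreasing order $\pi^*_1\ge\pi^*_2\ge\cdots$. (2) Let $M$ be the smallest nonnegative integer with $\sum_{n=1}^M|\pi^*_n|^2+\|\mathbf{R}_\Lambda\mathbf{r}\|^2\ge\alpha^2\|\mathbf{r}\|^2$. (3) For $j=0,\dots,J$ let $\Lambda^{\min}_j$ be $\Lambda_j$ together with the mode-$j$ indices associated with $\pi^*_1,\dots,\pi^*_M$, and $\Lambda^{\min}=\Lambda^{\min}_0\times\cdots\times\Lambda^{\min}_J$. (4) If $\|\mathbf{R}_{\Lambda^{\min}}\mathbf{r}\|\ge\alpha\|\mathbf{r}\|$, output $\bar\Lambda=\Lambda^{\min}$. (5) Otherwise set $\bar\Lambda_j=\tilde\Lambda_j$ for $j=1,\dots,J$; arrange the values $\pi^{(0)}_{(\bar\nu,\lambda)}(\mathbf{r})$, $(\bar\nu,\lambda)\in\tilde\Lambda_0\setminus\Lambda_0$,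 in nonincreasing order $\pi^{**}_1\ge\pi^{**}_2\ge\cdots$; let $K$ be the smallest nonnegative integer with $\sum_{n=1}^K|\pi^{**}_n|^2+\sum_{(\bar\nu,\lambda)\in\Lambda_0}|\pi^{(0)}_{(\bar\nu,\lambda)}(\mathbf{r})|^2\ge\alpha^2\|\mathbf{r}\|^2$; set $\bar\Lambda_0=\Lambda_0\cup\{$indices associated with $\pi^{**}_1,\dots,\pi^{**}_K\}$, and output $\bar\Lambda=\bar\Lambda_0\times\cdots\times\bar\Lambda_J$. *)

theory Defs
  imports "HOL-Analysis.Analysis"
begin

text \<open>F = finitely supported sequences nat => nat; G0 = F x S with S a countable
type 's; an element of G is a pair (g0, nu) with g0 in G0 and nu :: nat => nat representing
(nu_1,...,nu_J) (entries outside {1..J} are required to be 0).\<close>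

definition Fset :: "(nat \<Rightarrow> nat) set" where
  "Fset = {nu. finite {i. nu i \<noteq> 0}}"

definition G0set :: "((nat \<Rightarrow> nat) \<times> 's::countable) set" where
  "G0set = Fset \<times> UNIV"

definition prodset :: "nat \<Rightarrow> ('g set) \<Rightarrow> (nat \<Rightarrow> nat set) \<Rightarrow> ('g \<times> (nat \<Rightarrow> nat)) set" where
  "prodset J L0 Ls = {(g, nu). g \<in> L0 \<and> (\<forall>j\<in>{1..J}. nu j \<in> Ls j) \<and> (\<forall>j. j \<notin> {1..J} \<longrightarrow> nu j = 0)}"

definition l2norm :: "('x \<Rightarrow> real) \<Rightarrow> real" where
  "l2norm v = sqrt (\<Sum>\<^sub>\<infinity>x. (v x)\<^sup>2)"

definition restr :: "'x set \<Rightarrow> ('x \<Rightarrow> real) \<Rightarrow> ('x \<Rightarrow> real)" where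
  "restr L v = (\<lambda>x. if x \<in> L then v x else 0)"

definition pi0 :: "('g \<times> (nat \<Rightarrow> nat) \<Rightarrow> real) \<Rightarrow> 'g \<Rightarrow> real" where
  "pi0 v g = sqrt (\<Sum>\<^sub>\<infinity>nu. (v (g, nu))\<^sup>2)"

definition pij :: "('g \<times> (nat \<Rightarrow> nat) \<Rightarrow> real) \<Rightarrow> nat \<Rightarrow> nat \<Rightarrow> real" where
  "pij v j n = sqrt (\<Sum>\<^sub>\<infinity>x \<in> {x. snd x j = n}. (v x)\<^sup>2)"

text \<open>New-index contractions: Inl g for mode 0, Inr (j, n) for mode j >= 1.\<close>

definition new_items :: "nat \<Rightarrow> 'g set \<Rightarrow> (nat \<Rightarrow> nat set) \<Rightarrow> 'g set \<Rightarrow> (nat \<Rightarrow> nat set)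
    \<Rightarrow> ('g + nat \<times> nat) set" where
  "new_items J L0 Ls T0 Ts =
     Inl ` (T0 - L0) \<union> {Inr (j, n) | j n. j \<in> {1..J} \<and> n \<in> Ts j - Ls j}"

definition cval :: "('g \<times> (nat \<Rightarrow> nat) \<Rightarrow> real) \<Rightarrow> ('g + nat \<times> nat) \<Rightarrow> real" where
  "cval v i = (case i of Inl g \<Rightarrow> pi0 v g | Inr (j, n) \<Rightarrow> pij v j n)"

text \<open>expand_out J r L0 Ls T0 Ts alpha B0 Bs: (B0, Bs) is a possible output of
Expand(r, Lambda, tilde Lambda, alpha) for some admissible (tie-breaking) nonincreasing ordering.\<close>

definition expand_out :: "nat \<Rightarrow> ('g \<times> (nat \<Rightarrow> nat) \<Rightarrow> real) \<Rightarrow> 'g set \<Rightarrow> (nat \<Rightarrow> nat set)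
    \<Rightarrow> 'g set \<Rightarrow> (nat \<Rightarrow> nat set) \<Rightarrow> real \<Rightarrow> 'g set \<Rightarrow> (nat \<Rightarrow> nat set) \<Rightarrow> bool" where
  "expand_out J r L0 Ls T0 Ts \<alpha> B0 Bs \<longleftrightarrow>
    (\<exists>xs. distinct xs \<and> set xs = new_items J L0 Ls T0 Ts \<and>
       sorted_wrt (\<lambda>a b. cval r b \<le> cval r a) xs \<and>
       (let M = (LEAST M. \<alpha>\<^sup>2 * (l2norm r)\<^sup>2 \<le>
                   (\<Sum>i<M. (cval r (xs ! i))\<^sup>2) + (l2norm (restr (prodset J L0 Ls) r))\<^sup>2);
            Lm0 = L0 \<union> {g. Inl g \<in> set (take M xs)};
            Lms = (\<lambda>j. Ls j \<union> {n. Inr (j, n) \<in> set (take M xs)})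
        in if \<alpha> * l2norm r \<le> l2norm (restr (prodset J Lm0 Lms) r)
           then B0 = Lm0 \<and> (\<forall>j\<in>{1..J}. Bs j = Lms j)
           else (\<forall>j\<in>{1..J}. Bs j = Ts j) \<and>
                (\<exists>ys. distinct ys \<and> set ys = T0 - L0 \<and>
                   sorted_wrt (\<lambda>a b. pi0 r b \<le> pi0 r a) ys \<and>
                   (let K = (LEAST K. \<alpha>\<^sup>2 * (l2norm r)\<^sup>2 \<le>
                               (\<Sum>i<K. (pi0 r (ys ! i))\<^sup>2) + (\<Sum>g\<in>L0. (pi0 r g)\<^sup>2))
                    in B0 = L0 \<union> set (take K ys)))))"

definition cost :: "nat \<Rightarrow> 'g set \<Rightarrow> (nat \<Rightarrow> nat set) \<Rightarrow> 'g set \<Rightarrow> (nat \<Rightarrow> nat set) \<Rightarrow> nat" where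
  "cost J L0 Ls H0 Hs = card (H0 - L0) + (\<Sum>j=1..J. card (Hs j - Ls j))"

text \<open>Competitor product sets Lambda' in G with ||R_Lambda' r|| >= alpha ||r||
(finite differences, so that the cardinalities are the genuine ones; sets with an infinite
difference have infinite cost and can never be minimal).\<close>

definition admissible :: "nat \<Rightarrow> (((nat \<Rightarrow> nat) \<times> 's::countable) \<times> (nat \<Rightarrow> nat) \<Rightarrow> real)
    \<Rightarrow> real \<Rightarrow> ((nat \<Rightarrow> nat) \<times> 's) set \<Rightarrow> (nat \<Rightarrow> nat set)
    \<Rightarrow> ((nat \<Rightarrow> nat) \<times> 's) set \<Rightarrow> (nat \<Rightarrow> nat set) \<Rightarrow> bool" where
  "admissible J r \<alpha> L0 Ls H0 Hs \<longleftrightarrow>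
     H0 \<subseteq> G0set \<and> finite (H0 - L0) \<and> (\<forall>j\<in>{1..J}. finite (Hs j - Ls j)) \<and>
     \<alpha> * l2norm r \<le> l2norm (restr (prodset J H0 Hs) r)"

end

theory Submission
  imports Defs
begin

text \<open>Squared norms of restrictions of a finitely supported r are finite sums of squares,
hence monotone and subadditive in the restricting set, and on a fibre they are the squared
contractions. On the support of r a competitor product set \<Lambda>' lies in its intersection with
the enlarged set, which is covered by \<Lambda> and the fibres of its at most cost(\<Lambda>') new indices.
So if \<Lambda>' captures the fraction \<alpha>^2 of the squared norm of r, then so do \<Lambda> and the squared
contractions of at most cost(\<Lambda>') new indices; since Expand takes the largest contractions
first, its prefix length (M, or K in the fallback branch) is at most cost(\<Lambda>'). The set
\<Lambda>_min costs at most M, and the fallback at most K + J, as it adds exactly one index in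
each mode j \<ge> 1. Minimality of the competitor is never used.\<close>

lemma sum_le_sum_sorted_prefix:
  fixes g :: "'a \<Rightarrow> real"
  assumes "sorted_wrt (\<lambda>a b. g b \<le> g a) xs" "\<And>x. 0 \<le> g x" "S \<subseteq> set xs" "card S \<le> c"
  shows "sum g S \<le> (\<Sum>i<c. g (xs ! i))"
  using assms(1,3,4)
proof (induction xs arbitrary: S c)
  case Nil
  then show ?case by (simp add: assms(2) sum_nonneg)
next
  case (Cons a xs)
  show ?case
  proof (cases "S = {}")
    case True
    then show ?thesis by (simp add: assms(2) sum_nonneg)
  next
    case False
    then obtain c' where c: "c = Suc c'"
      using Cons.prems(3) finite_subset[OF Cons.prems(2)] by (cases c) auto
    have fin: "finite S" using Cons.prems(2) finite_subset by blast
    obtain s where s: "s \<in> S" "g s \<le> g a" "S - {s} \<subseteq> set xs"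
    proof (cases "a \<in> S")
      case True
      then show ?thesis using that Cons.prems(2) by auto
    next
      case False
      with \<open>S \<noteq> {}\<close> obtain s where "s \<in> S" by blast
      then show ?thesis using that False Cons.prems(1,2) by auto
    qed
    have "sum g S = g s + sum g (S - {s})" using fin s(1) by (rule sum.remove)
    also have "sum g (S - {s}) \<le> (\<Sum>i<c'. g (xs ! i))"
      using Cons.IH[of "S - {s}" c'] Cons.prems c s fin by simp
    also have "g s + (\<Sum>i<c'. g (xs ! i)) \<le> (\<Sum>i<c. g ((a # xs) ! i))"
      using s(2) by (simp add: c sum.lessThan_Suc_shift del: sum.lessThan_Suc)
    finally show ?thesis by simp
  qed
qed

lemma Least_sorted_prefix_le_card:
  fixes f :: "'a \<Rightarrow> real"
  assumes "sorted_wrt (\<lambda>a b. f b \<le> f a) xs" "\<And>x. 0 \<le> f x" "S \<subseteq> set xs"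
    and "t \<le> (\<Sum>x\<in>S. (f x)\<^sup>2) + b"
  shows "(LEAST k. t \<le> (\<Sum>i<k. (f (xs ! i))\<^sup>2) + b) \<le> card S"
proof (rule Least_le)
  have sorted_sq: "sorted_wrt (\<lambda>a b. (f b)\<^sup>2 \<le> (f a)\<^sup>2) xs"
    using assms(1) by (rule sorted_wrt_mono_rel[rotated]) (simp add: assms(2) power_mono)
  have "(\<Sum>x\<in>S. (f x)\<^sup>2) \<le> (\<Sum>i<card S. (f (xs ! i))\<^sup>2)"
    by (rule sum_le_sum_sorted_prefix[OF sorted_sq _ assms(3)]) simp_all
  then show "t \<le> (\<Sum>i<card S. (f (xs ! i))\<^sup>2) + b" using assms(4) by linarith
qed

lemma sum_lessThan_nth_eq_sum_set_take:
  assumes "distinct xs" "k \<le> length xs"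
  shows "(\<Sum>i<k. g (xs ! i)) = sum g (set (take k xs))"
proof -
  have "set (take k xs) = (!) xs ` {..<k}"
    using assms(2) by (simp add: nth_image lessThan_atLeast0)
  moreover have "inj_on ((!) xs) {..<k}"
    using assms by (auto simp: inj_on_def nth_eq_iff_index_eq)
  ultimately show ?thesis by (simp add: sum.reindex)
qed

lemma l2norm_nonneg: "0 \<le> l2norm v"
  by (simp add: l2norm_def infsum_nonneg)

lemma mult_l2norm_le_iff_power2:
  assumes "0 < \<alpha>"
  shows "\<alpha> * l2norm v \<le> l2norm w \<longleftrightarrow> \<alpha>\<^sup>2 * (l2norm v)\<^sup>2 \<le> (l2norm w)\<^sup>2"
proof -
  have "0 \<le> \<alpha> * l2norm v" using assms by (simp add: l2norm_nonneg)
  then have "\<alpha> * l2norm v \<le> l2norm w \<longleftrightarrow> (\<alpha> * l2norm v)\<^sup>2 \<le> (l2norm w)\<^sup>2"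
    using power_mono_iff[OF _ l2norm_nonneg[of w], of _ 2] by simp
  then show ?thesis by (simp add: power_mult_distrib)
qed

lemma restr_UNIV [simp]: "restr UNIV v = v"
  by (simp add: restr_def)

lemma restr_cong_support:
  assumes "Q \<inter> {x. v x \<noteq> 0} = Q' \<inter> {x. v x \<noteq> 0}"
  shows "restr Q v = restr Q' v"
proof
  fix x
  show "restr Q v x = restr Q' v x"
    using assms unfolding restr_def by (cases "v x = 0") auto
qed

lemma l2norm_restr_power2:
  assumes "finite {x. v x \<noteq> 0}"
  shows "(l2norm (restr Q v))\<^sup>2 = (\<Sum>x\<in>{x. v x \<noteq> 0} \<inter> Q. (v x)\<^sup>2)"
proof -
  have "(\<Sum>\<^sub>\<infinity>x. (restr Q v x)\<^sup>2) = (\<Sum>\<^sub>\<infinity>x\<in>{x. v x \<noteq> 0} \<inter> Q. (v x)\<^sup>2)"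
    unfolding restr_def by (intro infsum_cong_neutral) auto
  then show ?thesis
    using assms by (simp add: l2norm_def sum_nonneg)
qed

lemma l2norm_restr_power2_mono:
  assumes "finite {x. v x \<noteq> 0}" "Q \<inter> {x. v x \<noteq> 0} \<subseteq> Q'"
  shows "(l2norm (restr Q v))\<^sup>2 \<le> (l2norm (restr Q' v))\<^sup>2"
  unfolding l2norm_restr_power2[OF assms(1)] using assms by (intro sum_mono2) auto

lemma l2norm_restr_power2_Un_le:
  assumes "finite {x. v x \<noteq> 0}"
  shows "(l2norm (restr (A \<union> B) v))\<^sup>2 \<le> (l2norm (restr A v))\<^sup>2 + (l2norm (restr B v))\<^sup>2"
proof -
  let ?S = "{x. v x \<noteq> 0}"
  have "?S \<inter> (A \<union> B) = (?S \<inter> A) \<union> (?S \<inter> B)" by blast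
  moreover have "(\<Sum>x\<in>(?S \<inter> A) \<union> (?S \<inter> B). (v x)\<^sup>2)
      \<le> (\<Sum>x\<in>?S \<inter> A. (v x)\<^sup>2) + (\<Sum>x\<in>?S \<inter> B. (v x)\<^sup>2)"
    using assms sum_Un[of "?S \<inter> A" "?S \<inter> B" "\<lambda>x. (v x)\<^sup>2"]
      sum_nonneg[of "(?S \<inter> A) \<inter> (?S \<inter> B)" "\<lambda>x. (v x)\<^sup>2"] by simp
  ultimately show ?thesis unfolding l2norm_restr_power2[OF assms] by simp
qed

lemma l2norm_restr_power2_UN_le:
  assumes "finite {x. v x \<noteq> 0}" "finite I"
  shows "(l2norm (restr (\<Union>i\<in>I. B i) v))\<^sup>2 \<le> (\<Sum>i\<in>I. (l2norm (restr (B i) v))\<^sup>2)"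
  using assms(2)
proof (induction I rule: finite_induct)
  case empty
  then show ?case by (simp add: l2norm_restr_power2[OF assms(1)])
next
  case (insert i I)
  have "(l2norm (restr (\<Union>k\<in>insert i I. B k) v))\<^sup>2
      \<le> (l2norm (restr (B i) v))\<^sup>2 + (l2norm (restr (\<Union>k\<in>I. B k) v))\<^sup>2"
    using l2norm_restr_power2_Un_le[OF assms(1)] by simp
  then show ?case using insert by simp
qed

lemma l2norm_restr_power2_UN_disjoint:
  assumes "finite {x. v x \<noteq> 0}" "finite I" "disjoint_family_on B I"
  shows "(l2norm (restr (\<Union>i\<in>I. B i) v))\<^sup>2 = (\<Sum>i\<in>I. (l2norm (restr (B i) v))\<^sup>2)"
proof -
  let ?S = "{x. v x \<noteq> 0}"
  have "?S \<inter> (\<Union>i\<in>I. B i) = (\<Union>i\<in>I. ?S \<inter> B i)" by blast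
  moreover have "(\<Sum>x\<in>(\<Union>i\<in>I. ?S \<inter> B i). (v x)\<^sup>2) = (\<Sum>i\<in>I. \<Sum>x\<in>?S \<inter> B i. (v x)\<^sup>2)"
    using assms by (intro sum.UNION_disjoint) (auto simp: disjoint_family_on_def)
  ultimately show ?thesis unfolding l2norm_restr_power2[OF assms(1)] by simp
qed

definition fibre :: "'g + nat \<times> nat \<Rightarrow> ('g \<times> (nat \<Rightarrow> nat)) set" where
  "fibre i = (case i of Inl g \<Rightarrow> {x. fst x = g} | Inr (j, n) \<Rightarrow> {x. snd x j = n})"

lemma cval_eq_l2norm_restr_fibre: "cval v i = l2norm (restr (fibre i) v)"
proof (cases i)
  case (Inl g)
  have "(\<Sum>\<^sub>\<infinity>x. (restr (fibre i) v x)\<^sup>2) = (\<Sum>\<^sub>\<infinity>x\<in>range (Pair g). (v x)\<^sup>2)"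
    unfolding restr_def fibre_def Inl by (intro infsum_cong_neutral) auto
  also have "\<dots> = (\<Sum>\<^sub>\<infinity>nu. (v (g, nu))\<^sup>2)"
    by (subst infsum_reindex) (auto simp: inj_on_def o_def)
  finally show ?thesis by (simp add: Inl cval_def pi0_def l2norm_def)
next
  case (Inr jn)
  then obtain j n where i: "i = Inr (j, n)" by (cases jn) auto
  have "(\<Sum>\<^sub>\<infinity>x. (restr (fibre i) v x)\<^sup>2) = (\<Sum>\<^sub>\<infinity>x\<in>{x. snd x j = n}. (v x)\<^sup>2)"
    unfolding restr_def fibre_def i by (intro infsum_cong_neutral) auto
  then show ?thesis by (simp add: i cval_def pij_def l2norm_def)
qed

lemma pi0_eq_l2norm_restr_fibre: "pi0 v g = l2norm (restr (fibre (Inl g)) v)"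
  using cval_eq_l2norm_restr_fibre[of v "Inl g"] by (simp add: cval_def)

lemma cval_nonneg: "0 \<le> cval v i"
  by (simp add: cval_eq_l2norm_restr_fibre l2norm_nonneg)

lemma pi0_nonneg: "0 \<le> pi0 v g"
  by (simp add: pi0_eq_l2norm_restr_fibre l2norm_nonneg)

lemma prodset_cong:
  assumes "\<forall>j\<in>{1..J}. As j = Bs j"
  shows "prodset J A0 As = prodset J A0 Bs"
  using assms unfolding prodset_def by auto

lemma prodset_mono:
  assumes "A0 \<subseteq> B0" "\<forall>j\<in>{1..J}. As j \<subseteq> Bs j"
  shows "prodset J A0 As \<subseteq> prodset J B0 Bs"
  using assms unfolding prodset_def by auto

lemma prodset_Int:
  "prodset J A0 As \<inter> prodset J B0 Bs = prodset J (A0 \<inter> B0) (\<lambda>j. As j \<inter> Bs j)"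
  unfolding prodset_def by auto

lemma finite_prodset:
  assumes "finite A0" "\<forall>j\<in>{1..J}. finite (As j)"
  shows "finite (prodset J A0 As)"
proof -
  let ?ext = "\<lambda>f j. if j \<in> {1..J} then f j else (0::nat)"
  have "prodset J A0 As \<subseteq> A0 \<times> ?ext ` PiE {1..J} As"
  proof
    fix x assume "x \<in> prodset J A0 As"
    then obtain g nu where x: "x = (g, nu)" "g \<in> A0" "\<forall>j\<in>{1..J}. nu j \<in> As j"
        "\<forall>j. j \<notin> {1..J} \<longrightarrow> nu j = 0"
      unfolding prodset_def by auto
    then have "nu = ?ext (restrict nu {1..J})" by auto
    moreover have "restrict nu {1..J} \<in> PiE {1..J} As" using x(3) by auto
    ultimately show "x \<in> A0 \<times> ?ext ` PiE {1..J} As" using x(1,2) by blast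
  qed
  moreover have "finite (A0 \<times> ?ext ` PiE {1..J} As)"
    using assms by (intro finite_SigmaI finite_imageI finite_PiE) auto
  ultimately show ?thesis by (rule finite_subset)
qed

lemma prodset_subset_Un_fibres_new_items:
  "prodset J A0 As \<subseteq> prodset J L0 Ls \<union> (\<Union>i\<in>new_items J L0 Ls A0 As. fibre i)"
proof
  fix x assume "x \<in> prodset J A0 As"
  then obtain g nu where x: "x = (g, nu)" "g \<in> A0" "\<forall>j\<in>{1..J}. nu j \<in> As j"
      "\<forall>j. j \<notin> {1..J} \<longrightarrow> nu j = 0"
    unfolding prodset_def by auto
  consider "g \<notin> L0" | "g \<in> L0" "\<forall>j\<in>{1..J}. nu j \<in> Ls j" | j where "j \<in> {1..J}" "nu j \<notin> Ls j"
    by blast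
  then show "x \<in> prodset J L0 Ls \<union> (\<Union>i\<in>new_items J L0 Ls A0 As. fibre i)"
  proof cases
    case 1
    then have "Inl g \<in> new_items J L0 Ls A0 As" using x(2) by (simp add: new_items_def)
    moreover have "x \<in> fibre (Inl g)" using x(1) by (simp add: fibre_def)
    ultimately show ?thesis by blast
  next
    case 2
    then show ?thesis using x by (simp add: prodset_def)
  next
    case (3 j)
    then have "Inr (j, nu j) \<in> new_items J L0 Ls A0 As" using x(3) by (simp add: new_items_def)
    moreover have "x \<in> fibre (Inr (j, nu j))" using x(1) by (simp add: fibre_def)
    ultimately show ?thesis by blast
  qed
qed

lemma card_new_items:
  assumes "finite (new_items J L0 Ls A0 As)"
  shows "card (new_items J L0 Ls A0 As) = cost J L0 Ls A0 As"
proof -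
  let ?Sig = "SIGMA j:{1..J}. As j - Ls j"
  have eq: "new_items J L0 Ls A0 As = Inl ` (A0 - L0) \<union> Inr ` ?Sig"
    unfolding new_items_def by auto
  have fin0: "finite (A0 - L0)" and finSig: "finite ?Sig"
    using assms unfolding eq by (auto dest: finite_imageD)
  have fin: "\<forall>j\<in>{1..J}. finite (As j - Ls j)"
  proof
    fix j assume "j \<in> {1..J}"
    then have "As j - Ls j = snd ` (?Sig \<inter> {j} \<times> UNIV)" by force
    then show "finite (As j - Ls j)" using finSig by simp
  qed
  have "card (new_items J L0 Ls A0 As) = card (A0 - L0) + card ?Sig"
    unfolding eq using fin0 finSig by (subst card_Un_disjoint) (auto simp: card_image)
  also have "card ?Sig = (\<Sum>j=1..J. card (As j - Ls j))"
    using fin by simp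
  finally show ?thesis unfolding cost_def .
qed

lemma cost_greedy_le_length:
  assumes "B0 = L0 \<union> {g. Inl g \<in> set zs}" "\<forall>j\<in>{1..J}. Bs j = Ls j \<union> {n. Inr (j, n) \<in> set zs}"
  shows "cost J L0 Ls B0 Bs \<le> length zs"
proof -
  have sub: "new_items J L0 Ls B0 Bs \<subseteq> set zs" using assms unfolding new_items_def by auto
  then have "cost J L0 Ls B0 Bs = card (new_items J L0 Ls B0 Bs)"
    by (intro card_new_items[symmetric] finite_subset[OF sub]) simp
  also have "\<dots> \<le> card (set zs)" using sub by (simp add: card_mono)
  also have "\<dots> \<le> length zs" by (rule card_length)
  finally show ?thesis .
qed

lemma cost_fallback_le_length_add:
  assumes "B0 = L0 \<union> set zs" "\<forall>j\<in>{1..J}. Bs j = Ts j" "\<forall>j\<in>{1..J}. card (Ts j - Ls j) = 1"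
  shows "cost J L0 Ls B0 Bs \<le> length zs + J"
proof -
  have "card (B0 - L0) \<le> card (set zs)" using assms(1) by (intro card_mono) auto
  also have "\<dots> \<le> length zs" by (rule card_length)
  finally show ?thesis using assms(2,3) by (simp add: cost_def)
qed

lemma l2norm_restr_prodset_power2_eq_sum_pi0:
  assumes "finite {x. r x \<noteq> 0}" "{x. r x \<noteq> 0} \<subseteq> prodset J T0 Ts" "finite G"
  shows "(l2norm (restr (prodset J G Ts) r))\<^sup>2 = (\<Sum>g\<in>G. (pi0 r g)\<^sup>2)"
proof -
  have "restr (prodset J G Ts) r = restr (\<Union>g\<in>G. fibre (Inl g)) r"
    using assms(2) by (intro restr_cong_support) (auto simp: prodset_def fibre_def)
  moreover have "disjoint_family_on (\<lambda>g. fibre (Inl g)) G"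
    by (auto simp: disjoint_family_on_def fibre_def)
  ultimately show ?thesis
    using l2norm_restr_power2_UN_disjoint[OF assms(1,3)] by (simp add: pi0_eq_l2norm_restr_fibre)
qed

lemma admissible_new_items_bound:
  fixes r :: "((nat \<Rightarrow> nat) \<times> 's::countable) \<times> (nat \<Rightarrow> nat) \<Rightarrow> real"
  assumes fin: "finite {x. r x \<noteq> 0}" and supp: "{x. r x \<noteq> 0} \<subseteq> prodset J T0 Ts"
    and finN: "finite (new_items J L0 Ls T0 Ts)" and "0 < \<alpha>"
    and adm: "admissible J r \<alpha> L0 Ls H0 Hs"
  obtains I where "I \<subseteq> new_items J L0 Ls T0 Ts" "card I \<le> cost J L0 Ls H0 Hs"
    "\<alpha>\<^sup>2 * (l2norm r)\<^sup>2 \<le> (\<Sum>i\<in>I. (cval r i)\<^sup>2) + (l2norm (restr (prodset J L0 Ls) r))\<^sup>2"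
proof -
  let ?A0 = "H0 \<inter> T0" and ?As = "\<lambda>j. Hs j \<inter> Ts j"
  let ?I = "new_items J L0 Ls ?A0 ?As"
  have sub: "?I \<subseteq> new_items J L0 Ls T0 Ts" unfolding new_items_def by auto
  then have finI: "finite ?I" using finN by (rule finite_subset)
  have "card ?I = cost J L0 Ls ?A0 ?As" using finI by (rule card_new_items)
  also have "\<dots> \<le> cost J L0 Ls H0 Hs"
    using adm unfolding cost_def admissible_def by (intro add_mono card_mono sum_mono) auto
  finally have card: "card ?I \<le> cost J L0 Ls H0 Hs" .
  have "prodset J H0 Hs \<inter> {x. r x \<noteq> 0} \<subseteq> prodset J ?A0 ?As"
    using supp prodset_Int[of J H0 Hs T0 Ts] by blast
  then have cover: "prodset J H0 Hs \<inter> {x. r x \<noteq> 0} \<subseteq> prodset J L0 Ls \<union> (\<Union>i\<in>?I. fibre i)"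
    using prodset_subset_Un_fibres_new_items by blast
  have "\<alpha>\<^sup>2 * (l2norm r)\<^sup>2 \<le> (l2norm (restr (prodset J H0 Hs) r))\<^sup>2"
    using adm \<open>0 < \<alpha>\<close> by (simp add: admissible_def mult_l2norm_le_iff_power2)
  also have "\<dots> \<le> (l2norm (restr (prodset J L0 Ls \<union> (\<Union>i\<in>?I. fibre i)) r))\<^sup>2"
    using fin cover by (rule l2norm_restr_power2_mono)
  also have "\<dots> \<le> (l2norm (restr (prodset J L0 Ls) r))\<^sup>2 + (l2norm (restr (\<Union>i\<in>?I. fibre i) r))\<^sup>2"
    using fin by (rule l2norm_restr_power2_Un_le)
  also have "\<dots> \<le> (l2norm (restr (prodset J L0 Ls) r))\<^sup>2 + (\<Sum>i\<in>?I. (cval r i)\<^sup>2)"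
    using l2norm_restr_power2_UN_le[OF fin finI] by (simp add: cval_eq_l2norm_restr_fibre)
  finally show ?thesis using that sub card by (simp add: add.commute)
qed

lemma admissible_mode0_bound:
  fixes r :: "((nat \<Rightarrow> nat) \<times> 's::countable) \<times> (nat \<Rightarrow> nat) \<Rightarrow> real"
  assumes fin: "finite {x. r x \<noteq> 0}" and supp: "{x. r x \<noteq> 0} \<subseteq> prodset J T0 Ts"
    and "finite L0" and "0 < \<alpha>" and adm: "admissible J r \<alpha> L0 Ls H0 Hs"
  obtains S where "S \<subseteq> T0 - L0" "card S \<le> cost J L0 Ls H0 Hs"
    "\<alpha>\<^sup>2 * (l2norm r)\<^sup>2 \<le> (\<Sum>g\<in>S. (pi0 r g)\<^sup>2) + (\<Sum>g\<in>L0. (pi0 r g)\<^sup>2)"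
proof -
  let ?S = "H0 \<inter> T0 - L0"
  have sub: "?S \<subseteq> H0 - L0" by blast
  have finH: "finite (H0 - L0)" using adm by (simp add: admissible_def)
  have finS: "finite ?S" using sub finH by (rule finite_subset)
  have "card ?S \<le> card (H0 - L0)" using finH sub by (rule card_mono)
  then have card: "card ?S \<le> cost J L0 Ls H0 Hs" by (simp add: cost_def)
  have "prodset J H0 Hs \<inter> {x. r x \<noteq> 0} \<subseteq> prodset J (H0 \<inter> T0) (\<lambda>j. Hs j \<inter> Ts j)"
    using supp prodset_Int[of J H0 Hs T0 Ts] by blast
  also have "\<dots> \<subseteq> prodset J (?S \<union> L0) Ts"
    by (intro prodset_mono) auto
  finally have cover: "prodset J H0 Hs \<inter> {x. r x \<noteq> 0} \<subseteq> prodset J (?S \<union> L0) Ts" .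
  have "\<alpha>\<^sup>2 * (l2norm r)\<^sup>2 \<le> (l2norm (restr (prodset J H0 Hs) r))\<^sup>2"
    using adm \<open>0 < \<alpha>\<close> by (simp add: admissible_def mult_l2norm_le_iff_power2)
  also have "\<dots> \<le> (l2norm (restr (prodset J (?S \<union> L0) Ts) r))\<^sup>2"
    using fin cover by (rule l2norm_restr_power2_mono)
  also have "\<dots> = (\<Sum>g\<in>?S \<union> L0. (pi0 r g)\<^sup>2)"
    using finS \<open>finite L0\<close> by (intro l2norm_restr_prodset_power2_eq_sum_pi0[OF fin supp]) simp
  also have "\<dots> = (\<Sum>g\<in>?S. (pi0 r g)\<^sup>2) + (\<Sum>g\<in>L0. (pi0 r g)\<^sup>2)"
    using finS \<open>finite L0\<close> by (intro sum.union_disjoint) auto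
  finally have bound: "\<alpha>\<^sup>2 * (l2norm r)\<^sup>2 \<le> (\<Sum>g\<in>?S. (pi0 r g)\<^sup>2) + (\<Sum>g\<in>L0. (pi0 r g)\<^sup>2)" .
  show ?thesis by (rule that[OF _ card bound]) blast
qed

lemma greedy_prefix_le_admissible_cost:
  fixes r :: "((nat \<Rightarrow> nat) \<times> 's::countable) \<times> (nat \<Rightarrow> nat) \<Rightarrow> real"
  assumes "finite {x. r x \<noteq> 0}" "{x. r x \<noteq> 0} \<subseteq> prodset J T0 Ts"
    and xs: "set xs = new_items J L0 Ls T0 Ts" "sorted_wrt (\<lambda>a b. cval r b \<le> cval r a) xs"
    and "0 < \<alpha>" "admissible J r \<alpha> L0 Ls H0 Hs"
  shows "(LEAST M. \<alpha>\<^sup>2 * (l2norm r)\<^sup>2 \<le>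
            (\<Sum>i<M. (cval r (xs ! i))\<^sup>2) + (l2norm (restr (prodset J L0 Ls) r))\<^sup>2)
         \<le> cost J L0 Ls H0 Hs"
proof -
  have "finite (new_items J L0 Ls T0 Ts)" unfolding xs(1)[symmetric] by simp
  then obtain I where I: "I \<subseteq> new_items J L0 Ls T0 Ts" "card I \<le> cost J L0 Ls H0 Hs"
    "\<alpha>\<^sup>2 * (l2norm r)\<^sup>2 \<le> (\<Sum>i\<in>I. (cval r i)\<^sup>2) + (l2norm (restr (prodset J L0 Ls) r))\<^sup>2"
    by (rule admissible_new_items_bound[OF assms(1,2) _ assms(5,6)])
  from xs(2) cval_nonneg I(1)[folded xs(1)] I(3) have "(LEAST M. \<alpha>\<^sup>2 * (l2norm r)\<^sup>2 \<le>
            (\<Sum>i<M. (cval r (xs ! i))\<^sup>2) + (l2norm (restr (prodset J L0 Ls) r))\<^sup>2) \<le> card I"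
    by (rule Least_sorted_prefix_le_card)
  with I(2) show ?thesis by linarith
qed

lemma fallback_prefix_le_admissible_cost:
  fixes r :: "((nat \<Rightarrow> nat) \<times> 's::countable) \<times> (nat \<Rightarrow> nat) \<Rightarrow> real"
  assumes "finite {x. r x \<noteq> 0}" "{x. r x \<noteq> 0} \<subseteq> prodset J T0 Ts" "finite L0"
    and ys: "set ys = T0 - L0" "sorted_wrt (\<lambda>a b. pi0 r b \<le> pi0 r a) ys"
    and "0 < \<alpha>" "admissible J r \<alpha> L0 Ls H0 Hs"
  shows "(LEAST K. \<alpha>\<^sup>2 * (l2norm r)\<^sup>2 \<le> (\<Sum>i<K. (pi0 r (ys ! i))\<^sup>2) + (\<Sum>g\<in>L0. (pi0 r g)\<^sup>2))
         \<le> cost J L0 Ls H0 Hs"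
proof -
  obtain S where S: "S \<subseteq> T0 - L0" "card S \<le> cost J L0 Ls H0 Hs"
    "\<alpha>\<^sup>2 * (l2norm r)\<^sup>2 \<le> (\<Sum>g\<in>S. (pi0 r g)\<^sup>2) + (\<Sum>g\<in>L0. (pi0 r g)\<^sup>2)"
    by (rule admissible_mode0_bound[OF assms(1-3) assms(6,7)])
  from ys(2) pi0_nonneg S(1)[folded ys(1)] S(3) have "(LEAST K. \<alpha>\<^sup>2 * (l2norm r)\<^sup>2 \<le>
            (\<Sum>i<K. (pi0 r (ys ! i))\<^sup>2) + (\<Sum>g\<in>L0. (pi0 r g)\<^sup>2)) \<le> card S"
    by (rule Least_sorted_prefix_le_card)
  with S(2) show ?thesis by linarith
qed

lemma fallback_prefix_sufficient:
  fixes r :: "'g \<times> (nat \<Rightarrow> nat) \<Rightarrow> real"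
  assumes fin: "finite {x. r x \<noteq> 0}" and supp: "{x. r x \<noteq> 0} \<subseteq> prodset J T0 Ts"
    and "finite T0" "L0 \<subseteq> T0" and ys: "distinct ys" "set ys = T0 - L0"
    and "0 < \<alpha>" "\<alpha> \<le> 1"
    and K: "K = (LEAST K. \<alpha>\<^sup>2 * (l2norm r)\<^sup>2 \<le> (\<Sum>i<K. (pi0 r (ys ! i))\<^sup>2) + (\<Sum>g\<in>L0. (pi0 r g)\<^sup>2))"
  shows "\<alpha> * l2norm r \<le> l2norm (restr (prodset J (L0 \<union> set (take K ys)) Ts) r)"
proof -
  let ?suff = "\<lambda>k. \<alpha>\<^sup>2 * (l2norm r)\<^sup>2 \<le> (\<Sum>i<k. (pi0 r (ys ! i))\<^sup>2) + (\<Sum>g\<in>L0. (pi0 r g)\<^sup>2)"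
  have fin0: "finite L0" using \<open>L0 \<subseteq> T0\<close> \<open>finite T0\<close> by (rule finite_subset)
  have "restr UNIV r = restr (prodset J T0 Ts) r"
    using supp by (intro restr_cong_support) auto
  then have "(l2norm r)\<^sup>2 = (\<Sum>g\<in>T0. (pi0 r g)\<^sup>2)"
    using l2norm_restr_prodset_power2_eq_sum_pi0[OF fin supp \<open>finite T0\<close>] by simp
  also have "\<dots> = (\<Sum>i<length ys. (pi0 r (ys ! i))\<^sup>2) + (\<Sum>g\<in>L0. (pi0 r g)\<^sup>2)"
    using sum_lessThan_nth_eq_sum_set_take[OF ys(1) order.refl, of "\<lambda>g. (pi0 r g)\<^sup>2"] ys(2)
      sum.subset_diff[OF \<open>L0 \<subseteq> T0\<close> \<open>finite T0\<close>, of "\<lambda>g. (pi0 r g)\<^sup>2"] by simp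
  finally have full: "(l2norm r)\<^sup>2 = (\<Sum>i<length ys. (pi0 r (ys ! i))\<^sup>2) + (\<Sum>g\<in>L0. (pi0 r g)\<^sup>2)" .
  have "\<alpha>\<^sup>2 * (l2norm r)\<^sup>2 \<le> (l2norm r)\<^sup>2"
    using \<open>0 < \<alpha>\<close> \<open>\<alpha> \<le> 1\<close> by (intro mult_left_le_one_le) (simp_all add: power_le_one)
  with full have "?suff (length ys)" by linarith
  then have "K \<le> length ys" "?suff K" unfolding K by (auto intro: Least_le LeastI)
  then have "\<alpha>\<^sup>2 * (l2norm r)\<^sup>2 \<le> (\<Sum>g\<in>set (take K ys). (pi0 r g)\<^sup>2) + (\<Sum>g\<in>L0. (pi0 r g)\<^sup>2)"
    using sum_lessThan_nth_eq_sum_set_take[OF ys(1), of K "\<lambda>g. (pi0 r g)\<^sup>2"] by simp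
  also have "\<dots> = (\<Sum>g\<in>L0 \<union> set (take K ys). (pi0 r g)\<^sup>2)"
    using fin0 ys(2) by (subst sum.union_disjoint) (auto dest: in_set_takeD)
  also have "\<dots> = (l2norm (restr (prodset J (L0 \<union> set (take K ys)) Ts) r))\<^sup>2"
    using fin0 by (intro l2norm_restr_prodset_power2_eq_sum_pi0[OF fin supp, symmetric]) simp
  finally show ?thesis using \<open>0 < \<alpha>\<close> by (simp add: mult_l2norm_le_iff_power2)
qed

lemma expand_outE:
  assumes "expand_out J r L0 Ls T0 Ts \<alpha> B0 Bs"
  obtains (greedy) xs M where "set xs = new_items J L0 Ls T0 Ts"
      "sorted_wrt (\<lambda>a b. cval r b \<le> cval r a) xs"
      "M = (LEAST M. \<alpha>\<^sup>2 * (l2norm r)\<^sup>2 \<le>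
              (\<Sum>i<M. (cval r (xs ! i))\<^sup>2) + (l2norm (restr (prodset J L0 Ls) r))\<^sup>2)"
      "B0 = L0 \<union> {g. Inl g \<in> set (take M xs)}"
      "\<forall>j\<in>{1..J}. Bs j = Ls j \<union> {n. Inr (j, n) \<in> set (take M xs)}"
      "\<alpha> * l2norm r \<le> l2norm (restr (prodset J (L0 \<union> {g. Inl g \<in> set (take M xs)})
          (\<lambda>j. Ls j \<union> {n. Inr (j, n) \<in> set (take M xs)})) r)"
  | (fallback) ys K where "distinct ys" "set ys = T0 - L0"
      "sorted_wrt (\<lambda>a b. pi0 r b \<le> pi0 r a) ys"
      "K = (LEAST K. \<alpha>\<^sup>2 * (l2norm r)\<^sup>2 \<le> (\<Sum>i<K. (pi0 r (ys ! i))\<^sup>2) + (\<Sum>g\<in>L0. (pi0 r g)\<^sup>2))"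
      "B0 = L0 \<union> set (take K ys)" "\<forall>j\<in>{1..J}. Bs j = Ts j"
  using assms unfolding expand_out_def Let_def
  by (elim exE conjE, split if_split_asm) (blast intro: greedy[OF _ _ refl] fallback[OF _ _ _ refl])+

theorem theorem4p4:
  fixes J :: nat
    and r :: "((nat \<Rightarrow> nat) \<times> 's::countable) \<times> (nat \<Rightarrow> nat) \<Rightarrow> real"
    and L0 T0 B0 :: "((nat \<Rightarrow> nat) \<times> 's) set"
    and Ls Ts Bs :: "nat \<Rightarrow> nat set"
    and \<alpha> :: real
  assumes "J \<ge> 1"
    and "L0 \<subseteq> G0set" and "T0 \<subseteq> G0set"
    and "finite L0" and "finite T0"
    and "\<forall>j\<in>{1..J}. finite (Ls j) \<and> finite (Ts j)"
    and "L0 \<subseteq> T0" and "\<forall>j\<in>{1..J}. Ls j \<subseteq> Ts j"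
    and "\<forall>j\<in>{1..J}. card (Ts j - Ls j) = 1"
    and "\<forall>x. r x \<noteq> 0 \<longrightarrow> x \<in> prodset J T0 Ts"
    and "0 < \<alpha>" and "\<alpha> < 1"
    and "expand_out J r L0 Ls T0 Ts \<alpha> B0 Bs"
  shows "\<alpha> * l2norm r \<le> l2norm (restr (prodset J B0 Bs) r) \<and>
         (\<forall>H0 Hs. admissible J r \<alpha> L0 Ls H0 Hs \<and>
             (\<forall>H0' Hs'. admissible J r \<alpha> L0 Ls H0' Hs' \<longrightarrow>
                 cost J L0 Ls H0 Hs \<le> cost J L0 Ls H0' Hs')
           \<longrightarrow> cost J L0 Ls B0 Bs \<le> cost J L0 Ls H0 Hs + J)"
proof -
  have supp: "{x. r x \<noteq> 0} \<subseteq> prodset J T0 Ts" using assms(10) by blast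
  have fin: "finite {x. r x \<noteq> 0}"
    using finite_subset[OF supp finite_prodset] assms(5,6) by blast
  from assms(13) show ?thesis
  proof (cases rule: expand_outE)
    case (greedy xs M)
    have "\<alpha> * l2norm r \<le> l2norm (restr (prodset J B0 Bs) r)"
      using greedy(6) unfolding greedy(4) prodset_cong[OF greedy(5)] .
    moreover have "cost J L0 Ls B0 Bs \<le> M" using cost_greedy_le_length[OF greedy(4,5)] by simp
    moreover have "M \<le> cost J L0 Ls H0 Hs" if "admissible J r \<alpha> L0 Ls H0 Hs" for H0 Hs
      unfolding greedy(3) using fin supp greedy(1,2) assms(11) that
      by (rule greedy_prefix_le_admissible_cost)
    ultimately show ?thesis by (meson add_increasing2 le0 order_trans)
  next
    case (fallback ys K)
    have "\<alpha> * l2norm r \<le> l2norm (restr (prodset J B0 Bs) r)"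
      using fallback_prefix_sufficient[OF fin supp assms(5,7) fallback(1,2) assms(11) _ fallback(4)]
        assms(12) unfolding fallback(5) prodset_cong[OF fallback(6)] by simp
    moreover have "cost J L0 Ls B0 Bs \<le> K + J"
      using cost_fallback_le_length_add[OF fallback(5,6) assms(9)] by simp
    moreover have "K \<le> cost J L0 Ls H0 Hs" if "admissible J r \<alpha> L0 Ls H0 Hs" for H0 Hs
      unfolding fallback(4) using fin supp assms(4) fallback(2,3) assms(11) that
      by (rule fallback_prefix_le_admissible_cost)
    ultimately show ?thesis by (metis add_le_mono1 order_trans)
  qed
qed

end
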